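(* Let $p$ be an odd prime such that a Hadamard matrix of size $4p$ exists, and suppose $\alpha\ge1$ satisfies $(\mathcal{H}^{\mathbb{F}_p}_f)_\alpha\in\Delta(\mathcal{A},\le)$. Then $$\alpha\ge\frac{\log\binom{4p-1}{2p}-\log\sum_{i=0}^{p-1}\binom{4p-1}{i}-\log(4p-1)}{\log(4p-1)}\ge\frac{(4p-1)\left[h\!\left(\tfrac12+\tfrac1{8p-2}\right)-h\!\left(\tfrac14+\tfrac1{16p-4}\right)\right]-\log(16p^2-4p)}{\log(4p-1)},$$ where $h(x)=-x\log x-(1-x)\log(1-x)$ is the binary entropy and $\log$ is base $2$.
   Context: For a field $\mathbb{F}$, an $a/b$-subspace representation of a graph $G$ over $\mathbb{F}$ is a family of subspaces $S_g\subseteq\mathbb{F}^a$ ($g\in V(G)$) with $\dim S_g=b$ and $S_g\cap\sum_{g'\not\simeq g}S_{g'}=\{0\}$ for all $g$ (sum over vertices neither equal nor adjacent to $g$). The fractional Haemers bound $\mathcal{H}^{\mathbb{F}}_f(G)$ is the infimum of $a/b$ over all such representations; it belongs to $\Delta(\mathcal{G},\le)$. $\mathbb{F}_p$ is the field with $p$ elements. Graphs are finite simple undirected; $x\simeq x'$ means equal or adjacent. Strong product $G\boxtimes H$: $(g,h)\simeq(g',h')$ iff $g\simeq g'$ and $h\simeq h'$. $H\le G$ for graphs means a homomorphism $\overline{H}\to\overline{G}$ exists. $\Delta(\mathcal{G},\le)$: maps from graphs to $\mathbb{R}_{\ge0}$, $0$ on the empty graph, $1$ on $K_1$, additive under disjoint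 union, multiplicative under $\boxtimes$, monotone under $\le$. A noncommutative graph is a subspace $S\subseteq B(\mathcal{H})$ ($\mathcal{H}$ finite-dimensional) with $I\in S$, $S^*=S$. A cohomomorphism from $T\subseteq B(\mathcal{K})$ to $S\subseteq B(\mathcal{H})$ is a finite family of linear maps $E_i:\mathcal{K}\to\mathcal{H}$ with $\sum_iE_i^*E_i=I$ and $E_i^*SE_j\subseteq T$ for all $i,j$; $T\le S$ if one exists. $\widehat{G}=\operatorname{span}\{|x\rangle\langle x'|:x\simeq x'\}\subseteq B(\mathbb{C}^{V(G)})$, $\mathcal{C}_d=\mathbb{C}I\subseteq B(\mathbb{C}^d)$. $\mathcal{A}$ is the semiring (under $\oplus,\otimes$, up to unitary isomorphism) generated by all $\widehat{G}$ and $\mathcal{C}_d$; its elements have the form $\bigoplus_{d=1}^r\widehat{G_d}\otimes\mathcal{C}_d$. For $f\in\Delta(\mathcal{G},\le)$, $\alpha\ge1$, $f_\alpha(\bigoplus_{d}\widehat{G_d}\otimes\mathcal{C}_d)=\sum_d f(G_d)d^\alpha$. $\Delta(\mathcal{A},\le)$ is the set of $\le$-monotone semiring homomorphisms $\mathcal{A}\to\mathbb{R}_{\ge0}$. *)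

theory Defs
  imports Complex_Main "Jordan_Normal_Form.Matrix"
begin

type_synonym graph = "nat \<times> (nat \<Rightarrow> nat \<Rightarrow> bool)"

definition gwf :: "graph \<Rightarrow> bool" where
  "gwf G \<longleftrightarrow> (\<forall>i j. snd G i j \<longrightarrow> i < fst G \<and> j < fst G \<and> i \<noteq> j \<and> snd G j i)"

definition gsim :: "graph \<Rightarrow> nat \<Rightarrow> nat \<Rightarrow> bool" where
  "gsim G x y \<longleftrightarrow> x = y \<or> snd G x y"

definition gempty :: graph where "gempty = (0, \<lambda>_ _. False)"
definition gK1 :: graph where "gK1 = (1, \<lambda>_ _. False)"

definition gunion :: "graph \<Rightarrow> graph \<Rightarrow> graph" where
  "gunion G H = (fst G + fst H, \<lambda>i j.
     if i < fst G \<and> j < fst G then snd G i j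
     else if fst G \<le> i \<and> fst G \<le> j \<and> i < fst G + fst H \<and> j < fst G + fst H
          then snd H (i - fst G) (j - fst G) else False)"

text \<open>strong product; vertex (x,y) is encoded as x * |V(H)| + y\<close>
definition gstrong :: "graph \<Rightarrow> graph \<Rightarrow> graph" where
  "gstrong G H = (fst G * fst H, \<lambda>i j.
     i < fst G * fst H \<and> j < fst G * fst H \<and> i \<noteq> j \<and>
     gsim G (i div fst H) (j div fst H) \<and> gsim H (i mod fst H) (j mod fst H))"

text \<open>vectors of 'f^a are functions nat => 'f vanishing outside {0..<a}\<close>
definition lincomb :: "'f::field list \<Rightarrow> (nat \<Rightarrow> 'f) list \<Rightarrow> (nat \<Rightarrow> 'f)" where
  "lincomb cs vs = (\<lambda>i. \<Sum>k<length vs. cs ! k * (vs ! k) i)"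

definition fspan :: "(nat \<Rightarrow> 'f::field) set \<Rightarrow> (nat \<Rightarrow> 'f) set" where
  "fspan X = {lincomb cs vs | cs vs. length cs = length vs \<and> set vs \<subseteq> X}"

definition lin_indep :: "(nat \<Rightarrow> 'f::field) list \<Rightarrow> bool" where
  "lin_indep vs \<longleftrightarrow> (\<forall>cs. length cs = length vs \<and> lincomb cs vs = (\<lambda>_. 0)
        \<longrightarrow> (\<forall>k<length vs. cs ! k = 0))"

definition subspace_dim :: "nat \<Rightarrow> nat \<Rightarrow> (nat \<Rightarrow> 'f::field) set \<Rightarrow> bool" where
  "subspace_dim a b S \<longleftrightarrow> (\<forall>v\<in>S. \<forall>i\<ge>a. v i = 0) \<and>
     (\<exists>vs. length vs = b \<and> lin_indep vs \<and> fspan (set vs) = S)"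

definition subspace_rep :: "'f::field itself \<Rightarrow> nat \<Rightarrow> nat \<Rightarrow> graph \<Rightarrow> bool" where
  "subspace_rep _ a b G \<longleftrightarrow> (\<exists>S :: nat \<Rightarrow> (nat \<Rightarrow> 'f) set.
     (\<forall>g<fst G. subspace_dim a b (S g)) \<and>
     (\<forall>g<fst G. S g \<inter> fspan (\<Union>{S g' | g'. g' < fst G \<and> \<not> gsim G g g'}) = {\<lambda>_. 0}))"

definition fHaem :: "'f::field itself \<Rightarrow> graph \<Rightarrow> real" where
  "fHaem F G = Inf {real a / real b | a b. 0 < b \<and> subspace_rep F a b G}"

section \<open>Noncommutative graphs (as pairs (dim, subspace of complex matrices))\<close>

type_synonym ncgraph = "nat \<times> complex mat set"

definition cadj :: "complex mat \<Rightarrow> complex mat" where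
  "cadj A = mat (dim_col A) (dim_row A) (\<lambda>(i,j). cnj (A $$ (j,i)))"

text \<open>T \<le> S : a cohomomorphism from T (on C^m) to S (on C^n) exists\<close>
definition ncg_le :: "ncgraph \<Rightarrow> ncgraph \<Rightarrow> bool" where
  "ncg_le T S \<longleftrightarrow> (\<exists>Es :: complex mat list.
     (\<forall>E\<in>set Es. E \<in> carrier_mat (fst S) (fst T)) \<and>
     foldr (\<lambda>E acc. cadj E * E + acc) Es (0\<^sub>m (fst T) (fst T)) = 1\<^sub>m (fst T) \<and>
     (\<forall>Ei\<in>set Es. \<forall>Ej\<in>set Es. \<forall>X\<in>snd S. cadj Ei * X * Ej \<in> snd T))"

text \<open>hat G tensor C_d = span{ |x><x'| (x \<simeq> x') } tensor C I_d, on C^(|V| * d), index (x,k) = x*d+k\<close>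
definition hat_tensor :: "graph \<Rightarrow> nat \<Rightarrow> ncgraph" where
  "hat_tensor G d = (fst G * d, {M \<in> carrier_mat (fst G * d) (fst G * d).
     \<exists>c. \<forall>i<fst G * d. \<forall>j<fst G * d. M $$ (i,j) =
       (if i mod d = j mod d \<and> gsim G (i div d) (j div d) then c (i div d) (j div d) else 0)})"

definition ncg_dsum :: "ncgraph \<Rightarrow> ncgraph \<Rightarrow> ncgraph" where
  "ncg_dsum S T = (fst S + fst T, {four_block_mat A (0\<^sub>m (fst S) (fst T)) (0\<^sub>m (fst T) (fst S)) B
      | A B. A \<in> snd S \<and> B \<in> snd T})"

section \<open>The semiring A: element [G_1,...,G_r] stands for \<Oplus>_d hat(G_d) \<otimes> C_d\<close>

fun realize_from :: "nat \<Rightarrow> graph list \<Rightarrow> ncgraph" where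
  "realize_from d [] = (0, {0\<^sub>m 0 0})"
| "realize_from d (G # Gs) = ncg_dsum (hat_tensor G d) (realize_from (Suc d) Gs)"

definition realize :: "graph list \<Rightarrow> ncgraph" where
  "realize Gs = realize_from 1 Gs"

definition nth_or_empty :: "graph list \<Rightarrow> nat \<Rightarrow> graph" where
  "nth_or_empty Gs d = (if d < length Gs then Gs ! d else gempty)"

definition A_plus :: "graph list \<Rightarrow> graph list \<Rightarrow> graph list" where
  "A_plus Gs Hs = map (\<lambda>d. gunion (nth_or_empty Gs d) (nth_or_empty Hs d))
                      [0..<max (length Gs) (length Hs)]"

definition A_times :: "graph list \<Rightarrow> graph list \<Rightarrow> graph list" where
  "A_times Gs Hs = map (\<lambda>m. foldr gunion
      [gstrong (Gs ! d) (Hs ! e). d \<leftarrow> [0..<length Gs], e \<leftarrow> [0..<length Hs], (d+1)*(e+1) = m+1]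
      gempty) [0..<length Gs * length Hs]"

definition A_zero :: "graph list" where "A_zero = []"
definition A_one :: "graph list" where "A_one = [gK1]"

definition f_alpha :: "(graph \<Rightarrow> real) \<Rightarrow> real \<Rightarrow> graph list \<Rightarrow> real" where
  "f_alpha f \<alpha> Gs = (\<Sum>d<length Gs. f (Gs ! d) * real (d + 1) powr \<alpha>)"

definition Delta_A :: "(graph list \<Rightarrow> real) \<Rightarrow> bool" where
  "Delta_A F \<longleftrightarrow>
     F A_zero = 0 \<and> F A_one = 1 \<and>
     (\<forall>Gs. list_all gwf Gs \<longrightarrow> F Gs \<ge> 0) \<and>
     (\<forall>Gs Hs. list_all gwf Gs \<and> list_all gwf Hs \<longrightarrow>
        F (A_plus Gs Hs) = F Gs + F Hs \<and> F (A_times Gs Hs) = F Gs * F Hs) \<and>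
     (\<forall>Gs Hs. list_all gwf Gs \<and> list_all gwf Hs \<and> ncg_le (realize Gs) (realize Hs)
        \<longrightarrow> F Gs \<le> F Hs)"

definition hadamard_exists :: "nat \<Rightarrow> bool" where
  "hadamard_exists n \<longleftrightarrow> (\<exists>H :: nat \<Rightarrow> nat \<Rightarrow> int.
     (\<forall>i<n. \<forall>j<n. H i j = 1 \<or> H i j = -1) \<and>
     (\<forall>i<n. \<forall>j<n. (\<Sum>k<n. H i k * H j k) = (if i = j then int n else 0)))"

definition bin_entropy :: "real \<Rightarrow> real" where
  "bin_entropy x = - x * log 2 x - (1 - x) * log 2 (1 - x)"

end

(* Let G be the graph on the (2p - 1)-subsets of {..<4p - 1} in which two sets are adjacent when they
   meet in exactly p - 1 points. Over F_p the indicator vectors of the (p - 1)-subsets of each vertex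
   give a representation by lines, because p divides C(m, p - 1) for every m < 2p - 1 except m = p - 1;
   so the fractional Haemers bound of G is at most C(4p - 1, p - 1). On the other hand the padded sign
   vectors of the vertices are unit vectors of R^4p that are orthogonal on adjacent pairs, and the
   corresponding Kraus operators form a cohomomorphism from the edgeless graph on the C(4p - 1, 2p)
   vertices of G to G-hat tensor C_4p. Additivity and monotonicity of f_alpha therefore give
   C(4p - 1, 2p) <= C(4p - 1, p - 1) (4p)^alpha; both stated bounds follow by taking logarithms and
   comparing binomial coefficients with the binary entropy. *)

theory Submission
  imports Defs "HOL-Number_Theory.Residues"
begin

section \<open>Entropy estimates for binomial coefficients\<close>

definition binomial_weight :: "nat \<Rightarrow> nat \<Rightarrow> nat \<Rightarrow> nat" where
  "binomial_weight n k i = (n choose i) * k ^ i * (n - k) ^ (n - i)"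

lemma sum_binomial_weight:
  assumes "k \<le> n"
  shows "(\<Sum>i\<le>n. binomial_weight n k i) = n ^ n"
  using binomial_ring[of k "n - k" n] assms by (simp add: binomial_weight_def)

lemma Suc_times_binomial_Suc: "Suc k * (n choose Suc k) = (n - k) * (n choose k)"
  by (metis binomial_absorption binomial_absorb_comp)

lemma binomial_weight_Suc:
  assumes "i < n"
  shows "binomial_weight n k (Suc i) * (Suc i * (n - k)) = binomial_weight n k i * (k * (n - i))"
proof -
  have choose: "(n choose Suc i) * Suc i = (n choose i) * (n - i)"
    by (metis Suc_times_binomial_Suc mult.commute)
  have power: "(n - k) ^ (n - Suc i) * (n - k) = (n - k) ^ (n - i)"
    using assms by (simp flip: power_Suc2 add: Suc_diff_Suc)
  have "binomial_weight n k (Suc i) * (Suc i * (n - k))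
      = ((n choose Suc i) * Suc i) * (k ^ i * k) * ((n - k) ^ (n - Suc i) * (n - k))"
    unfolding binomial_weight_def by (simp only: power_Suc2 ac_simps)
  also have "\<dots> = binomial_weight n k i * (k * (n - i))"
    unfolding choose power binomial_weight_def by (simp only: ac_simps)
  finally show ?thesis .
qed

lemma binomial_weight_le_Suc:
  assumes "i < k" "k < n"
  shows "binomial_weight n k i \<le> binomial_weight n k (Suc i)"
proof -
  have "Suc i * (n - k) \<le> k * (n - i)"
    using assms by (intro mult_mono) auto
  then have "binomial_weight n k i * (Suc i * (n - k)) \<le> binomial_weight n k i * (k * (n - i))"
    by (rule mult_left_mono) simp
  also have "\<dots> = binomial_weight n k (Suc i) * (Suc i * (n - k))"
    using assms by (intro binomial_weight_Suc[symmetric]) simp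
  finally show ?thesis
    using assms by simp
qed

lemma binomial_weight_Suc_le:
  assumes "0 < k" "k \<le> i" "i < n"
  shows "binomial_weight n k (Suc i) \<le> binomial_weight n k i"
proof -
  have "k * (n - i) \<le> Suc i * (n - k)"
    using assms by (intro mult_mono) auto
  then have "binomial_weight n k (Suc i) * (k * (n - i))
      \<le> binomial_weight n k (Suc i) * (Suc i * (n - k))"
    by (rule mult_left_mono) simp
  also have "\<dots> = binomial_weight n k i * (k * (n - i))"
    using assms by (intro binomial_weight_Suc) simp
  finally show ?thesis
    using assms by simp
qed

lemma binomial_weight_le_mode:
  assumes "0 < k" "k < n" "i \<le> n"
  shows "binomial_weight n k i \<le> binomial_weight n k k"
proof (cases "i \<le> k")
  case True
  have "binomial_weight n k i \<le> binomial_weight n k m" if "i \<le> m" "m \<le> k" for m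
    using that
  proof (induction m rule: dec_induct)
    case (step m)
    then show ?case
      using binomial_weight_le_Suc[of m k n] assms by simp
  qed simp
  then show ?thesis
    using True by simp
next
  case False
  have "binomial_weight n k m \<le> binomial_weight n k k" if "k \<le> m" "m \<le> n" for m
    using that
  proof (induction m rule: dec_induct)
    case (step m)
    then show ?case
      using binomial_weight_Suc_le[of k m n] assms by simp
  qed simp
  then show ?thesis
    using False assms by simp
qed

lemma power_le_Suc_times_binomial_weight:
  assumes "0 < k" "k < n"
  shows "n ^ n \<le> (n + 1) * binomial_weight n k k"
proof -
  have "n ^ n = (\<Sum>i\<le>n. binomial_weight n k i)"
    using assms by (simp add: sum_binomial_weight)
  also have "\<dots> \<le> (\<Sum>i\<le>n. binomial_weight n k k)"
    using assms by (intro sum_mono binomial_weight_le_mode) auto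
  finally show ?thesis
    by simp
qed

lemma sum_binomial_below_times_le:
  assumes "2 * k \<le> n"
  shows "(\<Sum>i<k. n choose i) * (k ^ k * (n - k) ^ (n - k)) \<le> n ^ n"
proof -
  have "(n choose i) * (k ^ k * (n - k) ^ (n - k)) \<le> binomial_weight n k i" if "i < k" for i
  proof -
    have "k ^ k * (n - k) ^ (n - k) = k ^ i * k ^ (k - i) * (n - k) ^ (n - k)"
      using that by (simp flip: power_add)
    also have "\<dots> \<le> k ^ i * (n - k) ^ (k - i) * (n - k) ^ (n - k)"
      using assms by (intro mult_right_mono mult_left_mono power_mono) auto
    also have "\<dots> = k ^ i * (n - k) ^ (n - i)"
      using that assms by (simp flip: power_add add: mult.assoc)
    finally show ?thesis
      unfolding binomial_weight_def by (simp add: mult.assoc)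
  qed
  then have "(\<Sum>i<k. n choose i) * (k ^ k * (n - k) ^ (n - k)) \<le> (\<Sum>i<k. binomial_weight n k i)"
    by (auto simp: sum_distrib_right intro!: sum_mono)
  also have "\<dots> \<le> (\<Sum>i\<le>n. binomial_weight n k i)"
    using assms by (intro sum_mono2) auto
  also have "\<dots> = n ^ n"
    using assms by (simp add: sum_binomial_weight)
  finally show ?thesis .
qed

lemma bin_entropy_ratio:
  assumes "0 < k" "k < n"
  shows "real n * bin_entropy (real k / real n) =
     real n * log 2 (real n) - real k * log 2 (real k) - real (n - k) * log 2 (real (n - k))"
proof -
  have ratio: "1 - real k / real n = real (n - k) / real n"
    using assms by (simp add: field_simps of_nat_diff)
  have log_k: "log 2 (real k / real n) = log 2 (real k) - log 2 (real n)"
    and log_nk: "log 2 (real (n - k) / real n) = log 2 (real (n - k)) - log 2 (real n)"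
    using assms by (simp_all add: log_divide)
  have "real n * bin_entropy (real k / real n)
      = - real k * (log 2 (real k) - log 2 (real n))
        - real (n - k) * (log 2 (real (n - k)) - log 2 (real n))"
    using assms unfolding bin_entropy_def ratio log_k log_nk by (simp add: field_simps)
  also have "\<dots> = real n * log 2 (real n) - real k * log 2 (real k)
      - real (n - k) * log 2 (real (n - k))"
    using assms by (simp add: algebra_simps of_nat_diff)
  finally show ?thesis .
qed

lemma log_binomial_ge_entropy:
  assumes "0 < k" "k < n"
  shows "real n * bin_entropy (real k / real n) - log 2 (real n + 1) \<le> log 2 (real (n choose k))"
proof -
  have "real n ^ n \<le> (real n + 1) * real (n choose k) * real k ^ k * real (n - k) ^ (n - k)"
    using power_le_Suc_times_binomial_weight[OF assms]
    unfolding binomial_weight_def of_nat_le_iff[where 'a=real, symmetric]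
    by (simp only: of_nat_mult of_nat_power of_nat_add of_nat_1 mult.assoc)
  then have "log 2 (real n ^ n)
      \<le> log 2 ((real n + 1) * real (n choose k) * real k ^ k * real (n - k) ^ (n - k))"
    using assms by (intro log_mono) auto
  then show ?thesis
    using assms by (simp add: bin_entropy_ratio log_mult log_nat_power del: of_nat_diff)
qed

lemma log_sum_binomial_below_le_entropy:
  assumes "0 < k" "2 * k \<le> n"
  shows "log 2 (\<Sum>i<k. real (n choose i)) \<le> real n * bin_entropy (real k / real n)"
proof -
  have pos: "0 < (\<Sum>i<k. real (n choose i))"
    using assms by (intro sum_pos2[of _ 0]) auto
  have "(\<Sum>i<k. real (n choose i)) * real k ^ k * real (n - k) ^ (n - k) \<le> real n ^ n"
    using sum_binomial_below_times_le[OF assms(2)]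
    unfolding of_nat_le_iff[where 'a=real, symmetric]
    by (simp only: of_nat_mult of_nat_power of_nat_sum mult.assoc)
  then have "log 2 ((\<Sum>i<k. real (n choose i)) * real k ^ k * real (n - k) ^ (n - k))
      \<le> log 2 (real n ^ n)"
    using pos assms by (intro log_mono) auto
  then show ?thesis
    using pos assms by (simp add: bin_entropy_ratio log_mult log_nat_power del: of_nat_diff)
qed

lemma entropy_bound_le_binomial_bound:
  fixes p :: nat
  assumes "1 \<le> p"
  shows "((4 * real p - 1) * (bin_entropy (1/2 + 1/(8 * real p - 2))
                                - bin_entropy (1/4 + 1/(16 * real p - 4)))
           - log 2 (16 * (real p)^2 - 4 * real p)) / log 2 (4 * real p - 1)
       \<le> (log 2 (real ((4*p - 1) choose (2*p)))
           - log 2 (\<Sum>i<p. real ((4*p - 1) choose i))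
           - log 2 (4 * real p - 1)) / log 2 (4 * real p - 1)"
proof -
  define n where "n = 4 * p - 1"
  have n: "real n = 4 * real p - 1"
    using assms by (simp add: n_def of_nat_diff)
  have "1/2 + 1/(8 * real p - 2) = real (2 * p) / real n"
    and "1/4 + 1/(16 * real p - 4) = real p / real n"
    and "16 * (real p)^2 - 4 * real p = real n * (real n + 1)"
    using assms unfolding n by (simp_all add: field_simps power2_eq_square)
  moreover have "real n * bin_entropy (real (2 * p) / real n) - log 2 (real n + 1)
      \<le> log 2 (real (n choose (2 * p)))"
    using assms by (intro log_binomial_ge_entropy) (auto simp: n_def)
  moreover have "log 2 (\<Sum>i<p. real (n choose i)) \<le> real n * bin_entropy (real p / real n)"
    using assms by (intro log_sum_binomial_below_le_entropy) (auto simp: n_def)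
  moreover have "log 2 (real n * (real n + 1)) = log 2 (real n) + log 2 (real n + 1)"
    using assms by (simp add: log_mult n_def)
  ultimately have "(4 * real p - 1) * (bin_entropy (1/2 + 1/(8 * real p - 2))
                                - bin_entropy (1/4 + 1/(16 * real p - 4)))
           - log 2 (16 * (real p)^2 - 4 * real p)
       \<le> log 2 (real ((4*p - 1) choose (2*p)))
           - log 2 (\<Sum>i<p. real ((4*p - 1) choose i)) - log 2 (4 * real p - 1)"
    unfolding n_def[symmetric] n[symmetric] by (simp add: algebra_simps)
  moreover have "0 \<le> log 2 (4 * real p - 1)"
    using assms by simp
  ultimately show ?thesis
    by (rule divide_right_mono)
qed

section \<open>Subspace representations by lines\<close>

lemma sum_mult_lincomb:
  "(\<Sum>k<a. w k * lincomb cs vs k) = (\<Sum>m<length vs. cs ! m * (\<Sum>k<a. w k * (vs ! m) k))"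
  unfolding lincomb_def sum_distrib_left by (subst sum.swap) (simp only: mult.left_commute)

lemma sum_mult_fspan_eq_0:
  fixes w :: "nat \<Rightarrow> 'f::field"
  assumes "\<And>x. x \<in> X \<Longrightarrow> (\<Sum>k<a. w k * x k) = 0" "v \<in> fspan X"
  shows "(\<Sum>k<a. w k * v k) = 0"
proof -
  obtain cs vs where v: "v = lincomb cs vs" "set vs \<subseteq> X"
    using assms(2) unfolding fspan_def by blast
  then have "(\<Sum>k<a. w k * (vs ! m) k) = 0" if "m < length vs" for m
    using assms(1) nth_mem[OF that] by blast
  then show ?thesis
    unfolding v(1) sum_mult_lincomb by simp
qed

lemma fspan_singletonD:
  assumes "v \<in> fspan {y}"
  shows "\<exists>c. v = (\<lambda>k. c * y k)"
proof -
  obtain cs vs where v: "v = lincomb cs vs" "set vs \<subseteq> {y}"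
    using assms unfolding fspan_def by blast
  then have "\<And>m. m < length vs \<Longrightarrow> vs ! m = y"
    using nth_mem by blast
  then have "v = (\<lambda>k. (\<Sum>m<length vs. cs ! m) * y k)"
    unfolding v(1) lincomb_def by (simp add: sum_distrib_right)
  then show ?thesis ..
qed

lemma zero_in_fspan: "(\<lambda>_. 0) \<in> fspan X"
  unfolding fspan_def lincomb_def by (auto intro!: exI[of _ "[]"])

lemma lin_indep_single:
  fixes y w :: "nat \<Rightarrow> 'f::field"
  assumes "(\<Sum>k<a. w k * y k) \<noteq> 0"
  shows "lin_indep [y]"
  unfolding lin_indep_def
proof (intro allI impI)
  fix cs :: "'f list" and m
  assume cs: "length cs = length [y] \<and> lincomb cs [y] = (\<lambda>_. 0)" and "m < length [y]"
  have "cs ! 0 * (\<Sum>k<a. w k * y k) = (\<Sum>k<a. w k * lincomb cs [y] k)"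
    by (simp add: sum_mult_lincomb)
  also have "\<dots> = 0"
    using cs by simp
  finally show "cs ! m = 0"
    using assms \<open>m < length [y]\<close> by simp
qed

lemma subspace_dim_fspan_single:
  fixes y w :: "nat \<Rightarrow> 'f::field"
  assumes "\<And>k. a \<le> k \<Longrightarrow> y k = 0" "(\<Sum>k<a. w k * y k) \<noteq> 0"
  shows "subspace_dim a 1 (fspan {y})"
  unfolding subspace_dim_def
proof (intro conjI ballI allI impI exI[of _ "[y]"])
  fix v i assume "v \<in> fspan {y}" "a \<le> i"
  then obtain c where "v = (\<lambda>k. c * y k)"
    using fspan_singletonD by blast
  then show "v i = 0"
    using assms(1)[OF \<open>a \<le> i\<close>] by simp
qed (simp_all add: lin_indep_single[OF assms(2)])

lemma fspan_single_Int_fspan: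
  fixes y w :: "nat \<Rightarrow> 'f::field"
  assumes "(\<Sum>k<a. w k * y k) \<noteq> 0" "\<And>x. x \<in> X \<Longrightarrow> (\<Sum>k<a. w k * x k) = 0"
  shows "fspan {y} \<inter> fspan X = {\<lambda>_. 0}"
proof (intro subset_antisym subsetI)
  fix v assume v: "v \<in> fspan {y} \<inter> fspan X"
  obtain c where c: "v = (\<lambda>k. c * y k)"
    using fspan_singletonD v by blast
  have "(\<Sum>k<a. w k * v k) = c * (\<Sum>k<a. w k * y k)"
    unfolding c sum_distrib_left by (simp only: mult.left_commute)
  moreover have "v \<in> fspan X"
    using v by simp
  then have "(\<Sum>k<a. w k * v k) = 0"
    by (rule sum_mult_fspan_eq_0[rotated]) (rule assms(2))
  ultimately show "v \<in> {\<lambda>_. 0}"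
    using assms(1) c by simp
qed (simp add: zero_in_fspan)

lemma subspace_rep_1I:
  fixes y w :: "nat \<Rightarrow> nat \<Rightarrow> 'f::field"
  assumes support: "\<And>g k. a \<le> k \<Longrightarrow> y g k = 0"
    and diag: "\<And>g. g < fst G \<Longrightarrow> (\<Sum>k<a. w g k * y g k) \<noteq> 0"
    and off: "\<And>g g'. g < fst G \<Longrightarrow> g' < fst G \<Longrightarrow> \<not> gsim G g g' \<Longrightarrow> (\<Sum>k<a. w g k * y g' k) = 0"
  shows "subspace_rep TYPE('f) a 1 G"
  unfolding subspace_rep_def
proof (intro exI[of _ "\<lambda>g. fspan {y g}"] conjI allI impI)
  fix g assume g: "g < fst G"
  show "subspace_dim a 1 (fspan {y g})"
    using support diag[OF g] by (rule subspace_dim_fspan_single)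
  have "(\<Sum>k<a. w g k * x k) = 0"
    if x_in: "x \<in> \<Union>{fspan {y g'} | g'. g' < fst G \<and> \<not> gsim G g g'}" for x
  proof -
    obtain g' where g': "g' < fst G" "\<not> gsim G g g'" and x: "x \<in> fspan {y g'}"
      using x_in by blast
    show ?thesis
      by (rule sum_mult_fspan_eq_0[OF _ x]) (simp add: off[OF g g'])
  qed
  with diag[OF g] show "fspan {y g} \<inter> fspan (\<Union>{fspan {y g'} | g'. g' < fst G \<and> \<not> gsim G g g'})
      = {\<lambda>_. 0}"
    by (rule fspan_single_Int_fspan)
qed

lemma fHaem_le_of_subspace_rep_1:
  assumes "subspace_rep TYPE('f::field) a 1 G"
  shows "fHaem TYPE('f) G \<le> real a"
  unfolding fHaem_def
proof (rule cInf_lower)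
  show "real a \<in> {real a / real b |a b. 0 < b \<and> subspace_rep TYPE('f) a b G}"
    using assms by force
qed (auto intro: bdd_belowI[of _ 0])

section \<open>The intersection graph of (2p - 1)-sets\<close>

lemma fact_times_binomial: "fact k * (m choose k) = (\<Prod>i<k. m - i)"
proof (induction k)
  case (Suc k)
  have "fact (Suc k) * (m choose Suc k) = fact k * (Suc k * (m choose Suc k))"
    by (simp add: algebra_simps)
  also have "\<dots> = (m - k) * (fact k * (m choose k))"
    by (metis Suc_times_binomial_Suc mult.left_commute)
  finally show ?case
    using Suc.IH by simp
qed simp

(* By fact_times_binomial, p divides C(m, p - 1) iff it divides one of the factors m - i, i < p - 1,
   all of which lie in [0, 2p - 1]. *)
lemma prime_dvd_binomial_pred_iff:
  assumes "prime p" "m \<le> 2 * p - 1"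
  shows "p dvd (m choose (p - 1)) \<longleftrightarrow> m \<noteq> p - 1 \<and> m \<noteq> 2 * p - 1"
proof -
  have "\<not> p dvd fact (p - 1)"
    using assms(1) prime_gt_0_nat[OF assms(1)] by (simp add: prime_dvd_fact_iff)
  then have "p dvd (m choose (p - 1)) \<longleftrightarrow> p dvd (\<Prod>i<p - 1. m - i)"
    using assms(1) by (simp flip: fact_times_binomial add: prime_dvd_mult_iff)
  also have "\<dots> \<longleftrightarrow> (\<exists>i<p - 1. m - i = 0 \<or> m - i = p)"
  proof -
    have "p dvd x \<longleftrightarrow> x = 0 \<or> x = p" if "x \<le> 2 * p - 1" for x
    proof
      assume "p dvd x"
      then obtain q where "x = p * q" ..
      moreover have "q < 2"
      proof (rule ccontr)
        assume "\<not> q < 2"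
        then have "p * 2 \<le> p * q"
          by simp
        then show False
          using that \<open>x = p * q\<close> prime_gt_0_nat[OF assms(1)] by linarith
      qed
      ultimately show "x = 0 \<or> x = p"
        by (cases q) auto
    qed auto
    then show ?thesis
      using assms by (auto simp: prime_dvd_prod_iff)
  qed
  also have "\<dots> \<longleftrightarrow> m \<noteq> p - 1 \<and> m \<noteq> 2 * p - 1"
  proof
    assume "m \<noteq> p - 1 \<and> m \<noteq> 2 * p - 1"
    then show "\<exists>i<p - 1. m - i = 0 \<or> m - i = p"
      using assms by (cases "m < p - 1") (auto intro: exI[of _ "m - p"])
  qed (use assms in auto)
  finally show ?thesis .
qed

lemma not_prime_dvd_binomial_card_Int_iff:
  assumes "prime p" "finite A" "finite B" "card A = 2 * p - 1" "card B = 2 * p - 1"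
  shows "\<not> p dvd (card (A \<inter> B) choose (p - 1)) \<longleftrightarrow> A = B \<or> card (A \<inter> B) = p - 1"
proof -
  have "card (A \<inter> B) \<le> 2 * p - 1"
    using assms card_mono[of A "A \<inter> B"] by simp
  then have "\<not> p dvd (card (A \<inter> B) choose (p - 1))
      \<longleftrightarrow> card (A \<inter> B) = p - 1 \<or> card (A \<inter> B) = 2 * p - 1"
    using prime_dvd_binomial_pred_iff[OF assms(1)] by blast
  moreover have "card (A \<inter> B) = 2 * p - 1 \<longleftrightarrow> A = B"
  proof
    assume "card (A \<inter> B) = 2 * p - 1"
    then have "A \<inter> B = A" "A \<inter> B = B"
      using assms by (intro card_subset_eq; simp)+
    then show "A = B"
      by simp
  qed (use assms in simp)
  ultimately show ?thesis
    by blast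
qed

lemma CHAR_eq_prime_card:
  assumes "card (UNIV :: 'f::field set) = p" "prime p"
  shows "CHAR('f) = p"
  using CHAR_dvd_CARD[where 'a='f] assms by (auto simp: prime_nat_iff)

lemma of_nat_eq_0_iff_dvd_prime_card:
  assumes "card (UNIV :: 'f::field set) = p" "prime p"
  shows "of_nat x = (0::'f) \<longleftrightarrow> p dvd x"
  using CHAR_eq_prime_card[OF assms] by (simp add: of_nat_eq_0_iff_char_dvd)

lemma ex_bij_betw_subsets_card:
  assumes "finite U"
  obtains e where "bij_betw e {..<card U choose q} {S. S \<subseteq> U \<and> card S = q}"
proof -
  have "finite {S. S \<subseteq> U \<and> card S = q}"
    by (rule finite_subset[of _ "Pow U"]) (use assms in auto)
  then show ?thesis
    using ex_bij_betw_nat_finite[of "{S. S \<subseteq> U \<and> card S = q}"] that assms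
    by (auto simp: n_subsets atLeast0LessThan)
qed

lemma sum_of_bool_subset_enum:
  assumes "bij_betw e {..<a} {S. S \<subseteq> U \<and> card S = q}" "B \<subseteq> U" "finite U"
  shows "(\<Sum>k<a. of_bool (e k \<subseteq> B)) = (of_nat (card B choose q) :: 'a::semiring_1)"
proof -
  have "(\<Sum>k<a. of_bool (e k \<subseteq> B)) = (\<Sum>S\<in>{S. S \<subseteq> U \<and> card S = q}. of_bool (S \<subseteq> B) :: 'a)"
    using assms(1) by (rule sum.reindex_bij_betw)
  also have "\<dots> = of_nat (card {S. S \<subseteq> B \<and> card S = q})"
  proof -
    have "finite {S. S \<subseteq> U \<and> card S = q}"
      by (rule finite_subset[of _ "Pow U"]) (use assms(3) in auto)
    moreover have "{S. S \<subseteq> U \<and> card S = q} \<inter> {S. S \<subseteq> B} = {S. S \<subseteq> B \<and> card S = q}"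
      using assms(2) by blast
    ultimately show ?thesis
      by simp
  qed
  also have "\<dots> = of_nat (card B choose q)"
    using finite_subset[OF assms(2,3)] by (simp add: n_subsets)
  finally show ?thesis .
qed

definition intersection_graph :: "nat \<Rightarrow> (nat \<Rightarrow> nat set) \<Rightarrow> nat \<Rightarrow> graph" where
  "intersection_graph N h t = (N, \<lambda>i j. i < N \<and> j < N \<and> i \<noteq> j \<and> card (h i \<inter> h j) = t)"

lemma gwf_intersection_graph: "gwf (intersection_graph N h t)"
  unfolding gwf_def intersection_graph_def by (auto simp: Int_commute)

(* The coordinates are indexed by the (p - 1)-subsets T of {..<n}, and y i and w i are both the
   indicator vector of T \<subseteq> h i. Hence w j \<bullet> y i counts the (p - 1)-subsets of h i \<inter> h j,
   which modulo p vanishes exactly when h i and h j are distinct and not adjacent. *)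
lemma fHaem_intersection_graph_le:
  assumes "prime p" and card_f: "card (UNIV :: 'f::field set) = p"
    and h: "\<And>i. i < N \<Longrightarrow> h i \<subseteq> {..<n} \<and> card (h i) = 2 * p - 1"
    and "inj_on h {..<N}"
  shows "fHaem TYPE('f) (intersection_graph N h (p - 1)) \<le> real (n choose (p - 1))"
proof -
  define a where "a = n choose (p - 1)"
  obtain e where e: "bij_betw e {..<a} {S. S \<subseteq> {..<n} \<and> card S = p - 1}"
    using ex_bij_betw_subsets_card[of "{..<n}" "p - 1"] unfolding a_def by auto
  define y :: "nat \<Rightarrow> nat \<Rightarrow> 'f" where "y i k = of_bool (k < a \<and> e k \<subseteq> h i)" for i k
  define w :: "nat \<Rightarrow> nat \<Rightarrow> 'f" where "w j k = of_bool (e k \<subseteq> h j)" for j k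
  have pairing: "(\<Sum>k<a. w j k * y i k) \<noteq> 0 \<longleftrightarrow> i = j \<or> card (h i \<inter> h j) = p - 1"
    if "i < N" "j < N" for i j
  proof -
    have "(\<Sum>k<a. w j k * y i k) = (\<Sum>k<a. of_bool (e k \<subseteq> h i \<inter> h j))"
      unfolding w_def y_def by (intro sum.cong) auto
    also have "\<dots> = of_nat (card (h i \<inter> h j) choose (p - 1))"
      using h[OF that(1)] by (intro sum_of_bool_subset_enum[OF e]) auto
    finally have "(\<Sum>k<a. w j k * y i k) \<noteq> 0 \<longleftrightarrow> \<not> p dvd (card (h i \<inter> h j) choose (p - 1))"
      using of_nat_eq_0_iff_dvd_prime_card[OF card_f \<open>prime p\<close>] by simp
    also have "\<dots> \<longleftrightarrow> h i = h j \<or> card (h i \<inter> h j) = p - 1"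
      using h[OF that(1)] h[OF that(2)] finite_subset[OF _ finite_lessThan]
      by (intro not_prime_dvd_binomial_card_Int_iff \<open>prime p\<close>) auto
    finally show ?thesis
      using \<open>inj_on h {..<N}\<close> that by (auto dest: inj_onD)
  qed
  have "subspace_rep TYPE('f) a 1 (intersection_graph N h (p - 1))"
  proof (rule subspace_rep_1I[where y = y and w = w])
    show "y g k = 0" if "a \<le> k" for g k
      using that by (simp add: y_def)
    show "(\<Sum>k<a. w g k * y g k) \<noteq> 0" if "g < fst (intersection_graph N h (p - 1))" for g
      using that pairing[of g g] by (simp add: intersection_graph_def)
    show "(\<Sum>k<a. w g k * y g' k) = 0"
      if "g < fst (intersection_graph N h (p - 1))" "g' < fst (intersection_graph N h (p - 1))"
        and "\<not> gsim (intersection_graph N h (p - 1)) g g'" for g g'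
      using that pairing[of g' g] by (auto simp: intersection_graph_def gsim_def Int_commute)
  qed
  then show ?thesis
    unfolding a_def by (rule fHaem_le_of_subspace_rep_1)
qed

section \<open>Cohomomorphisms from orthogonal representations\<close>

lemma carrier_mat_0_0: "carrier_mat 0 0 = {0\<^sub>m 0 0}"
  by (auto intro: eq_matI)

lemma four_block_mat_empty_left:
  assumes "A \<in> carrier_mat 0 0"
  shows "four_block_mat A B C D = D"
  using assms unfolding four_block_mat_def Let_def by (intro eq_matI) auto

lemma four_block_mat_empty_right:
  assumes "A \<in> carrier_mat r c" "D \<in> carrier_mat 0 0"
  shows "four_block_mat A B C D = A"
  using assms unfolding four_block_mat_def Let_def by (intro eq_matI) auto

lemma ncg_dsum_empty_left: "ncg_dsum (0, {0\<^sub>m 0 0}) S = S"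
  unfolding ncg_dsum_def by (auto simp: four_block_mat_empty_left intro: prod_eqI)

lemma ncg_dsum_empty_right:
  assumes "\<And>A. A \<in> snd S \<Longrightarrow> A \<in> carrier_mat (fst S) (fst S)"
  shows "ncg_dsum S (0, {0\<^sub>m 0 0}) = S"
proof -
  have "{four_block_mat A (0\<^sub>m (fst S) 0) (0\<^sub>m 0 (fst S)) (0\<^sub>m 0 0) | A. A \<in> snd S} = snd S"
  proof (intro equalityI subsetI)
    fix X assume "X \<in> snd S"
    then show "X \<in> {four_block_mat A (0\<^sub>m (fst S) 0) (0\<^sub>m 0 (fst S)) (0\<^sub>m 0 0) | A. A \<in> snd S}"
      unfolding mem_Collect_eq by (intro exI[of _ X]) (simp add: four_block_mat_empty_right[OF assms])
  qed (auto simp: four_block_mat_empty_right[OF assms])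
  then show ?thesis
    unfolding ncg_dsum_def by simp
qed

lemma hat_tensor_gempty: "hat_tensor gempty d = (0, {0\<^sub>m 0 0})"
  unfolding hat_tensor_def gempty_def by (simp add: carrier_mat_0_0)

lemma hat_tensor_carrier:
  "A \<in> snd (hat_tensor G d) \<Longrightarrow> A \<in> carrier_mat (fst (hat_tensor G d)) (fst (hat_tensor G d))"
  unfolding hat_tensor_def by simp

lemma realize_from_single: "realize_from k (replicate m gempty @ [G]) = hat_tensor G (k + m)"
  by (induction m arbitrary: k)
    (simp_all add: hat_tensor_gempty ncg_dsum_empty_left ncg_dsum_empty_right hat_tensor_carrier)

lemma realize_single:
  assumes "0 < d"
  shows "realize (replicate (d - 1) gempty @ [G]) = hat_tensor G d"
  using assms unfolding realize_def realize_from_single by simp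

lemma diagonal_mem_hat_tensor_edgeless:
  assumes "Y \<in> carrier_mat N N" "\<And>a b. a < N \<Longrightarrow> b < N \<Longrightarrow> a \<noteq> b \<Longrightarrow> Y $$ (a, b) = 0"
  shows "Y \<in> snd (hat_tensor (N, \<lambda>_ _. False) 1)"
  unfolding hat_tensor_def using assms by (auto simp: gsim_def intro!: exI[of _ "\<lambda>i j. Y $$ (i, j)"])

(* kraus_op N d u v is the map e_v \<mapsto> e_v \<otimes> u v from C^N to C^N \<otimes> C^d, where the index i of
   C^N \<otimes> C^d stands for the pair (i div d, i mod d), as in hat_tensor. *)
definition kraus_op :: "nat \<Rightarrow> nat \<Rightarrow> (nat \<Rightarrow> nat \<Rightarrow> real) \<Rightarrow> nat \<Rightarrow> complex mat" where
  "kraus_op N d u v = mat (N * d) N (\<lambda>(i, j).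
     if j = v \<and> i div d = v then complex_of_real (u v (i mod d)) else 0)"

lemma kraus_op_carrier: "kraus_op N d u v \<in> carrier_mat (N * d) N"
  unfolding kraus_op_def by simp

lemma cadj_carrier: "A \<in> carrier_mat r c \<Longrightarrow> cadj A \<in> carrier_mat c r"
  unfolding cadj_def by simp

lemma index_mult_mat_sum:
  assumes "A \<in> carrier_mat r m" "B \<in> carrier_mat m c" "i < r" "j < c"
  shows "(A * B) $$ (i, j) = (\<Sum>k<m. A $$ (i, k) * B $$ (k, j))"
  using assms by (simp add: scalar_prod_def atLeast0LessThan)

lemma block_index_less:
  assumes "v < N" "k < d"
  shows "v * d + k < N * (d::nat)"
proof -
  have "v * d + k < Suc v * d"
    using assms(2) by simp
  also have "\<dots> \<le> N * d"
    using assms(1) by (intro mult_right_mono) auto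
  finally show ?thesis .
qed

lemma sum_block:
  fixes f :: "nat \<Rightarrow> 'a::comm_monoid_add"
  assumes "v < N"
  shows "(\<Sum>i<N * d. if i div d = v then f i else 0) = (\<Sum>k<d. f (v * d + k))"
proof -
  have "{i \<in> {..<N * d}. i div d = v} = (\<lambda>k. v * d + k) ` {..<d}"
  proof (intro equalityI subsetI)
    fix i assume i: "i \<in> {i \<in> {..<N * d}. i div d = v}"
    then have "0 < d"
      by (cases "d = 0") auto
    then have "i mod d < d"
      by simp
    moreover have "i = v * d + i mod d"
      using i div_mult_mod_eq[of i d] by auto
    ultimately show "i \<in> (\<lambda>k. v * d + k) ` {..<d}"
      by (metis image_eqI lessThan_iff)
  qed (use assms block_index_less in auto)
  then have "(\<Sum>i<N * d. if i div d = v then f i else 0) = (\<Sum>i\<in>(\<lambda>k. v * d + k) ` {..<d}. f i)"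
    by (simp add: sum.inter_filter[symmetric])
  also have "\<dots> = (\<Sum>k<d. f (v * d + k))"
    by (subst sum.reindex) (auto simp: inj_on_def)
  finally show ?thesis .
qed

lemma adj_kraus_op_mult_index:
  assumes M: "M \<in> carrier_mat (N * d) c" and "a < N" "j < c" "v < N"
  shows "(cadj (kraus_op N d u v) * M) $$ (a, j) =
    (if a = v then \<Sum>k<d. complex_of_real (u v k) * M $$ (v * d + k, j) else 0)"
proof -
  have "(cadj (kraus_op N d u v) * M) $$ (a, j)
      = (\<Sum>i<N * d. cadj (kraus_op N d u v) $$ (a, i) * M $$ (i, j))"
    using assms cadj_carrier[OF kraus_op_carrier] by (intro index_mult_mat_sum) auto
  also have "\<dots> = (\<Sum>i<N * d. if a = v \<and> i div d = v
      then complex_of_real (u v (i mod d)) * M $$ (i, j) else 0)"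
    using \<open>a < N\<close> by (intro sum.cong) (auto simp: cadj_def kraus_op_def)
  also have "\<dots> = (if a = v then
      \<Sum>k<d. complex_of_real (u v ((v * d + k) mod d)) * M $$ (v * d + k, j) else 0)"
    using sum_block[OF \<open>v < N\<close>, of d "\<lambda>i. complex_of_real (u v (i mod d)) * M $$ (i, j)"]
    by simp
  also have "\<dots> = (if a = v then \<Sum>k<d. complex_of_real (u v k) * M $$ (v * d + k, j) else 0)"
    by (auto intro!: sum.cong)
  finally show ?thesis .
qed

lemma mult_kraus_op_index:
  assumes M: "M \<in> carrier_mat r (N * d)" and "a < r" "b < N" "w < N"
  shows "(M * kraus_op N d u w) $$ (a, b) =
    (if b = w then \<Sum>l<d. M $$ (a, w * d + l) * complex_of_real (u w l) else 0)"
proof -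
  have "(M * kraus_op N d u w) $$ (a, b) = (\<Sum>i<N * d. M $$ (a, i) * kraus_op N d u w $$ (i, b))"
    using assms kraus_op_carrier by (intro index_mult_mat_sum) auto
  also have "\<dots> = (\<Sum>i<N * d. if b = w \<and> i div d = w
      then M $$ (a, i) * complex_of_real (u w (i mod d)) else 0)"
    using \<open>b < N\<close> by (intro sum.cong) (auto simp: kraus_op_def)
  also have "\<dots> = (if b = w then
      \<Sum>l<d. M $$ (a, w * d + l) * complex_of_real (u w ((w * d + l) mod d)) else 0)"
    using sum_block[OF \<open>w < N\<close>, of d "\<lambda>i. M $$ (a, i) * complex_of_real (u w (i mod d))"]
    by simp
  also have "\<dots> = (if b = w then \<Sum>l<d. M $$ (a, w * d + l) * complex_of_real (u w l) else 0)"
    by (auto intro!: sum.cong)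
  finally show ?thesis .
qed

lemma kraus_op_sandwich_index:
  assumes X: "X \<in> carrier_mat (N * d) (N * d)" and "a < N" "b < N" "v < N" "w < N"
  shows "(cadj (kraus_op N d u v) * X * kraus_op N d u w) $$ (a, b) =
    (if a = v \<and> b = w then \<Sum>l<d. \<Sum>k<d.
       complex_of_real (u v k) * X $$ (v * d + k, w * d + l) * complex_of_real (u w l) else 0)"
proof -
  have "cadj (kraus_op N d u v) * X \<in> carrier_mat N (N * d)"
    using cadj_carrier[OF kraus_op_carrier] X by (rule mult_carrier_mat)
  then have "(cadj (kraus_op N d u v) * X * kraus_op N d u w) $$ (a, b) = (if b = w then
      \<Sum>l<d. (cadj (kraus_op N d u v) * X) $$ (a, w * d + l) * complex_of_real (u w l) else 0)"
    using assms by (intro mult_kraus_op_index) auto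
  also have "\<dots> = (if a = v \<and> b = w then \<Sum>l<d.
      (\<Sum>k<d. complex_of_real (u v k) * X $$ (v * d + k, w * d + l)) * complex_of_real (u w l) else 0)"
    using assms block_index_less by (auto simp: adj_kraus_op_mult_index intro: sum.cong)
  finally show ?thesis
    by (simp add: sum_distrib_right)
qed

lemma adj_kraus_op_mult_self:
  assumes "v < N" "(\<Sum>k<d. (u v k)^2) = 1"
  shows "cadj (kraus_op N d u v) * kraus_op N d u v = mat N N (\<lambda>(a, b). of_bool (a = v \<and> b = v))"
proof (rule eq_matI)
  fix a b assume "a < dim_row (mat N N (\<lambda>(a, b). of_bool (a = v \<and> b = v) :: complex))"
    and "b < dim_col (mat N N (\<lambda>(a, b). of_bool (a = v \<and> b = v) :: complex))"
  then have ab: "a < N" "b < N"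
    by auto
  have "(cadj (kraus_op N d u v) * kraus_op N d u v) $$ (a, b) = (if a = v then
      \<Sum>k<d. complex_of_real (u v k) * kraus_op N d u v $$ (v * d + k, b) else 0)"
    by (rule adj_kraus_op_mult_index[OF kraus_op_carrier ab assms(1)])
  also have "\<dots> = (if a = v \<and> b = v then \<Sum>k<d. complex_of_real ((u v k)^2) else 0)"
    using ab assms(1) by (auto simp: kraus_op_def block_index_less power2_eq_square intro!: sum.cong)
  also have "\<dots> = of_bool (a = v \<and> b = v)"
    unfolding of_real_sum[symmetric] assms(2) by simp
  finally show "(cadj (kraus_op N d u v) * kraus_op N d u v) $$ (a, b)
      = mat N N (\<lambda>(a, b). of_bool (a = v \<and> b = v)) $$ (a, b)"
    using ab by simp
qed (auto simp: cadj_def kraus_op_def)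

lemma sum_adj_kraus_op_mult_self:
  assumes "\<And>v. v < N \<Longrightarrow> (\<Sum>k<d. (u v k)^2) = 1" "distinct xs" "set xs \<subseteq> {..<N}"
  shows "foldr (\<lambda>E acc. cadj E * E + acc) (map (kraus_op N d u) xs) (0\<^sub>m N N)
    = mat N N (\<lambda>(a, b). of_bool (a = b \<and> a \<in> set xs))"
  using assms(2,3)
proof (induction xs)
  case (Cons v xs)
  then show ?case
    using assms(1) by (auto simp: adj_kraus_op_mult_self intro!: eq_matI)
qed (auto intro: eq_matI)

lemma kraus_op_sandwich_hat_tensor_offdiag:
  assumes X: "X \<in> snd (hat_tensor G d)" and "fst G = N" "v < N" "w < N"
    and orth: "v \<noteq> w \<Longrightarrow> snd G v w \<Longrightarrow> (\<Sum>k<d. u v k * u w k) = 0"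
    and "a < N" "b < N" "a \<noteq> b"
  shows "(cadj (kraus_op N d u v) * X * kraus_op N d u w) $$ (a, b) = 0"
proof -
  obtain c where c: "\<And>i j. i < N * d \<Longrightarrow> j < N * d \<Longrightarrow> X $$ (i, j) =
      (if i mod d = j mod d \<and> gsim G (i div d) (j div d) then c (i div d) (j div d) else 0)"
    using X \<open>fst G = N\<close> by (auto simp: hat_tensor_def)
  have X_block: "X $$ (v * d + k, w * d + l) = (if k = l \<and> snd G v w then c v w else 0)"
    if "v \<noteq> w" "k < d" "l < d" for k l
    using c[OF block_index_less block_index_less] assms that by (simp add: gsim_def)
  have "(\<Sum>l<d. \<Sum>k<d. complex_of_real (u v k) * X $$ (v * d + k, w * d + l)
      * complex_of_real (u w l)) = 0" if "v \<noteq> w"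
  proof (cases "snd G v w")
    case True
    have "(\<Sum>l<d. \<Sum>k<d. complex_of_real (u v k) * X $$ (v * d + k, w * d + l)
        * complex_of_real (u w l)) = (\<Sum>l<d. \<Sum>k<d.
          if k = l then c v w * complex_of_real (u v k * u w l) else 0)"
      using True that by (intro sum.cong refl) (simp add: X_block)
    also have "\<dots> = (\<Sum>l<d. c v w * complex_of_real (u v l * u w l))"
      by simp
    also have "\<dots> = c v w * complex_of_real (\<Sum>l<d. u v l * u w l)"
      by (simp add: sum_distrib_left)
    finally show ?thesis
      using orth[OF that True] by simp
  qed (use that in \<open>simp add: X_block\<close>)
  moreover have "X \<in> carrier_mat (N * d) (N * d)"
    using X \<open>fst G = N\<close> by (simp add: hat_tensor_def)
  ultimately show ?thesis
    using assms by (simp add: kraus_op_sandwich_index)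
qed

lemma ncg_le_edgeless_hat_tensor:
  fixes u :: "nat \<Rightarrow> nat \<Rightarrow> real"
  assumes "fst G = N"
    and unit: "\<And>v. v < N \<Longrightarrow> (\<Sum>k<d. (u v k)^2) = 1"
    and orth: "\<And>v w. v < N \<Longrightarrow> w < N \<Longrightarrow> v \<noteq> w \<Longrightarrow> snd G v w \<Longrightarrow> (\<Sum>k<d. u v k * u w k) = 0"
  shows "ncg_le (hat_tensor (N, \<lambda>_ _. False) 1) (hat_tensor G d)"
  unfolding ncg_le_def
proof (intro exI[of _ "map (kraus_op N d u) [0..<N]"] conjI ballI)
  have "foldr (\<lambda>E acc. cadj E * E + acc) (map (kraus_op N d u) [0..<N]) (0\<^sub>m N N) = 1\<^sub>m N"
    using unit by (subst sum_adj_kraus_op_mult_self) (auto intro: eq_matI)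
  then show "foldr (\<lambda>E acc. cadj E * E + acc) (map (kraus_op N d u) [0..<N])
      (0\<^sub>m (fst (hat_tensor (N, \<lambda>_ _. False) 1)) (fst (hat_tensor (N, \<lambda>_ _. False) 1)))
    = 1\<^sub>m (fst (hat_tensor (N, \<lambda>_ _. False) 1))"
    by (simp add: hat_tensor_def)
next
  fix E assume "E \<in> set (map (kraus_op N d u) [0..<N])"
  then show "E \<in> carrier_mat (fst (hat_tensor G d)) (fst (hat_tensor (N, \<lambda>_ _. False) 1))"
    using \<open>fst G = N\<close> kraus_op_carrier by (auto simp: hat_tensor_def)
next
  fix Ei Ej X
  assume "Ei \<in> set (map (kraus_op N d u) [0..<N])" "Ej \<in> set (map (kraus_op N d u) [0..<N])"
    and X: "X \<in> snd (hat_tensor G d)"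
  then obtain v w where v: "v < N" "Ei = kraus_op N d u v" and w: "w < N" "Ej = kraus_op N d u w"
    by auto
  have "X \<in> carrier_mat (N * d) (N * d)"
    using X \<open>fst G = N\<close> by (simp add: hat_tensor_def)
  then have "cadj Ei * X * Ej \<in> carrier_mat N N"
    unfolding v w using cadj_carrier[OF kraus_op_carrier] kraus_op_carrier by (intro mult_carrier_mat)
  then show "cadj Ei * X * Ej \<in> snd (hat_tensor (N, \<lambda>_ _. False) 1)"
    using kraus_op_sandwich_hat_tensor_offdiag[OF X \<open>fst G = N\<close> v(1) w(1)] orth v w
    by (intro diagonal_mem_hat_tensor_edgeless) auto
qed

lemma A_plus_edgeless_K1: "A_plus [(n, \<lambda>_ _. False)] [gK1] = [(Suc n, \<lambda>_ _. False)]"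
  unfolding A_plus_def nth_or_empty_def gunion_def gK1_def by (simp add: fun_eq_iff)

lemma Delta_A_edgeless:
  assumes "Delta_A F" "1 \<le> n"
  shows "F [(n, \<lambda>_ _. False)] = real n"
  using assms(2)
proof (induction n rule: dec_induct)
  case base
  then show ?case
    using assms(1) by (simp add: Delta_A_def A_one_def gK1_def)
next
  case (step n)
  have "gwf (n, \<lambda>_ _. False)" "gwf gK1"
    by (simp_all add: gwf_def gK1_def)
  then have "F (A_plus [(n, \<lambda>_ _. False)] [gK1]) = F [(n, \<lambda>_ _. False)] + F [gK1]"
    using assms(1) unfolding Delta_A_def by simp
  then show ?case
    using step.IH assms(1) by (simp add: A_plus_edgeless_K1 Delta_A_def A_one_def)
qed

lemma fHaem_gempty_le: "fHaem TYPE('f::field) gempty \<le> 0"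
proof -
  have "subspace_rep TYPE('f) 0 1 gempty"
    unfolding subspace_rep_def gempty_def by simp
  then show ?thesis
    using fHaem_le_of_subspace_rep_1 by fastforce
qed

lemma f_alpha_fHaem_single_le:
  "f_alpha (fHaem TYPE('f::field)) \<alpha> (replicate m gempty @ [G]) \<le> fHaem TYPE('f) G * real (m + 1) powr \<alpha>"
proof -
  have "f_alpha (fHaem TYPE('f)) \<alpha> (replicate m gempty @ [G]) =
      (\<Sum>k<m. fHaem TYPE('f) gempty * real (k + 1) powr \<alpha>) + fHaem TYPE('f) G * real (m + 1) powr \<alpha>"
    unfolding f_alpha_def by (simp add: nth_append)
  moreover have "(\<Sum>k<m. fHaem TYPE('f) gempty * real (k + 1) powr \<alpha>) \<le> 0"
    using fHaem_gempty_le[where 'f='f] by (intro sum_nonpos mult_nonpos_nonneg) auto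
  ultimately show ?thesis
    by simp
qed

lemma Delta_A_orthogonal_rep_le:
  fixes u :: "nat \<Rightarrow> nat \<Rightarrow> real"
  assumes "Delta_A (f_alpha (fHaem TYPE('f::field)) \<alpha>)" "gwf G" "fst G = N" "1 \<le> N" "0 < d"
    and "\<And>v. v < N \<Longrightarrow> (\<Sum>k<d. (u v k)^2) = 1"
    and "\<And>v w. v < N \<Longrightarrow> w < N \<Longrightarrow> v \<noteq> w \<Longrightarrow> snd G v w \<Longrightarrow> (\<Sum>k<d. u v k * u w k) = 0"
  shows "real N \<le> fHaem TYPE('f) G * real d powr \<alpha>"
proof -
  let ?F = "f_alpha (fHaem TYPE('f)) \<alpha>"
  have "ncg_le (realize [(N, \<lambda>_ _. False)]) (realize (replicate (d - 1) gempty @ [G]))"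
    using realize_single[of 1 "(N, \<lambda>_ _. False)"] realize_single[OF \<open>0 < d\<close>, of G]
      ncg_le_edgeless_hat_tensor[OF assms(3,6,7)] by simp
  moreover have "list_all gwf [(N, \<lambda>_ _. False)]" "list_all gwf (replicate (d - 1) gempty @ [G])"
    using \<open>gwf G\<close> by (simp_all add: gwf_def gempty_def list_all_iff)
  ultimately have "?F [(N, \<lambda>_ _. False)] \<le> ?F (replicate (d - 1) gempty @ [G])"
    using assms(1) unfolding Delta_A_def by blast
  also have "\<dots> \<le> fHaem TYPE('f) G * real d powr \<alpha>"
    using f_alpha_fHaem_single_le[of \<alpha> "d - 1" G] \<open>0 < d\<close> by simp
  finally show ?thesis
    using Delta_A_edgeless[OF assms(1,4)] by simp
qed

(* For n = 4p - 1 and two (2p - 1)-sets meeting in p - 1 points the inner product over 4p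
   coordinates is 4(p - 1) - 4(2p - 1) + (4p - 1) + 1 = 0, so dimension 4p suffices and no Hadamard
   matrix is needed. *)
definition sign_vector :: "nat \<Rightarrow> nat set \<Rightarrow> nat \<Rightarrow> real" where
  "sign_vector n A k = (if k < n \<and> k \<notin> A then -1 else 1)"

lemma sum_normalized_sign_vector_square:
  assumes "0 < m"
  shows "(\<Sum>k<m. (sign_vector n A k / sqrt (real m))^2) = 1"
proof -
  have "(sign_vector n A k / sqrt (real m))^2 = 1 / real m" for k
    by (cases "k < n \<and> k \<notin> A") (simp_all add: power_divide sign_vector_def)
  then show ?thesis
    using assms by simp
qed

lemma sum_sign_vector_mult:
  assumes "A \<subseteq> {..<n}" "B \<subseteq> {..<n}"
  shows "(\<Sum>k<n. sign_vector n A k * sign_vector n B k)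
    = 4 * real (card (A \<inter> B)) - 2 * real (card A) - 2 * real (card B) + real n"
proof -
  have indicator: "(\<Sum>k<n. of_bool (k \<in> S) :: real) = real (card S)" if "S \<subseteq> {..<n}" for S
    using that by (simp add: Int_absorb1)
  have "(\<Sum>k<n. sign_vector n A k * sign_vector n B k) = (\<Sum>k<n. 4 * of_bool (k \<in> A \<inter> B)
      - 2 * of_bool (k \<in> A) - 2 * of_bool (k \<in> B) + 1)"
    by (intro sum.cong) (auto simp: sign_vector_def)
  also have "\<dots> = 4 * real (card (A \<inter> B)) - 2 * real (card A) - 2 * real (card B) + real n"
    using assms indicator[of "A \<inter> B"] indicator[of A] indicator[of B] le_infI1[OF assms(1)]
    by (simp add: sum.distrib sum_subtractf flip: sum_distrib_left)
  finally show ?thesis .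
qed

lemma sign_vectors_orthogonal:
  assumes "1 \<le> p" "A \<subseteq> {..<4 * p - 1}" "B \<subseteq> {..<4 * p - 1}"
    and "card A = 2 * p - 1" "card B = 2 * p - 1" "card (A \<inter> B) = p - 1"
  shows "(\<Sum>k<4 * p. sign_vector (4 * p - 1) A k * sign_vector (4 * p - 1) B k) = 0"
proof -
  define n where "n = 4 * p - 1"
  have "4 * p = Suc n"
    using assms(1) by (simp add: n_def)
  then have "(\<Sum>k<4 * p. sign_vector n A k * sign_vector n B k)
      = (\<Sum>k<n. sign_vector n A k * sign_vector n B k) + 1"
    by (simp add: sign_vector_def)
  also have "\<dots> = 0"
    using assms by (simp add: sum_sign_vector_mult n_def of_nat_diff)
  finally show ?thesis
    unfolding n_def .
qed

lemma binomial_le_binomial_mult_powr: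
  fixes p :: nat and \<alpha> :: real
  assumes "prime p" "card (UNIV :: 'f::field set) = p"
    and "Delta_A (f_alpha (fHaem TYPE('f)) \<alpha>)"
  shows "real ((4 * p - 1) choose (2 * p)) \<le> real ((4 * p - 1) choose (p - 1)) * real (4 * p) powr \<alpha>"
proof -
  define n where "n = 4 * p - 1"
  define N where "N = n choose (2 * p - 1)"
  have p: "2 \<le> p"
    using prime_ge_2_nat[OF assms(1)] .
  obtain h where h: "bij_betw h {..<N} {A. A \<subseteq> {..<n} \<and> card A = 2 * p - 1}"
    using ex_bij_betw_subsets_card[of "{..<n}" "2 * p - 1"] unfolding N_def by auto
  then have h_sets: "h i \<subseteq> {..<n} \<and> card (h i) = 2 * p - 1" if "i < N" for i
    using bij_betw_apply[OF h] that by simp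
  define G where "G = intersection_graph N h (p - 1)"
  define u where "u v k = sign_vector n (h v) k / sqrt (real (4 * p))" for v k
  have "real N \<le> fHaem TYPE('f) G * real (4 * p) powr \<alpha>"
  proof (rule Delta_A_orthogonal_rep_le[OF assms(3)])
    show "gwf G"
      unfolding G_def by (rule gwf_intersection_graph)
    show "fst G = N"
      by (simp add: G_def intersection_graph_def)
    show "1 \<le> N" "0 < 4 * p"
      using p by (simp_all add: N_def n_def Suc_le_eq)
    show "(\<Sum>k<4 * p. (u v k)^2) = 1" for v
      unfolding u_def using p by (intro sum_normalized_sign_vector_square) simp
    show "(\<Sum>k<4 * p. u v k * u w k) = 0" if "v < N" "w < N" "v \<noteq> w" "snd G v w" for v w
    proof -
      have "(\<Sum>k<4 * p. sign_vector n (h v) k * sign_vector n (h w) k) = 0"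
        using h_sets[OF that(1)] h_sets[OF that(2)] that(4) p unfolding n_def
        by (intro sign_vectors_orthogonal) (auto simp: G_def intersection_graph_def)
      then show ?thesis
        by (simp add: u_def sum_divide_distrib[symmetric])
    qed
  qed
  also have "\<dots> \<le> real (n choose (p - 1)) * real (4 * p) powr \<alpha>"
    using fHaem_intersection_graph_le[OF assms(1,2) h_sets bij_betw_imp_inj_on[OF h]]
    unfolding G_def by (intro mult_right_mono) auto
  moreover have "N = n choose (2 * p)"
    using binomial_symmetric[of "2 * p - 1" n] p unfolding N_def n_def by simp
  ultimately show ?thesis
    unfolding n_def by simp
qed

lemma log_ratio_shift:
  fixes x n :: real
  assumes "8 \<le> n" "x \<le> n"
  shows "(x - log 2 n) / log 2 n \<le> x / log 2 (n + 1)"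
proof -
  define a b where "a = log 2 (n + 1)" and "b = log 2 n"
  have "3 \<le> b"
    using assms log_mono[of 2 8 n] by (simp add: b_def log_nat_power[of 2 2 3, simplified])
  moreover have "b \<le> a"
    using assms unfolding a_def b_def by simp
  moreover have "x * (a - b) \<le> a * b"
  proof (cases "x \<le> 0")
    case False
    have "1 + 1 / n = (n + 1) / n"
      using assms by (simp add: field_simps)
    then have "a - b = log 2 (1 + 1 / n)"
      using assms unfolding a_def b_def by (simp add: log_divide)
    also have "\<dots> \<le> (1 / n) / ln 2"
      unfolding log_def using assms by (intro divide_right_mono ln_add_one_self_le_self) auto
    also have "\<dots> \<le> 2 / n"
    proof -
      have "1/2 \<le> ln (2::real)"
        using ln_le_minus_one[of "1/2"] by (simp add: ln_div)
      then show ?thesis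
        using assms by (simp add: field_simps)
    qed
    finally have "x * (a - b) \<le> n * (2 / n)"
      using False assms \<open>b \<le> a\<close> by (intro mult_mono) auto
    also have "\<dots> \<le> a * b"
      using \<open>3 \<le> b\<close> \<open>b \<le> a\<close> assms mult_mono[of 3 a 3 b] by simp
    finally show ?thesis .
  qed (use \<open>3 \<le> b\<close> \<open>b \<le> a\<close> in \<open>auto intro: order_trans[OF mult_nonpos_nonneg]\<close>)
  ultimately show ?thesis
    unfolding a_def[symmetric] b_def[symmetric] by (simp add: field_simps)
qed

lemma alpha_ge_of_binomial_le_binomial_mult_powr:
  fixes p :: nat and \<alpha> :: real
  assumes "3 \<le> p"
    and bound: "real ((4 * p - 1) choose (2 * p)) \<le> real ((4 * p - 1) choose (p - 1)) * real (4 * p) powr \<alpha>"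
  shows "(log 2 (real ((4*p - 1) choose (2*p)))
            - log 2 (\<Sum>i<p. real ((4*p - 1) choose i))
            - log 2 (4 * real p - 1)) / log 2 (4 * real p - 1) \<le> \<alpha>"
proof -
  define n where "n = 4 * p - 1"
  define S where "S = (\<Sum>i<p. real (n choose i))"
  define x where "x = log 2 (real (n choose (2 * p))) - log 2 S"
  have n: "real n = 4 * real p - 1" "real (4 * p) = real n + 1"
    using assms(1) by (simp_all add: n_def of_nat_diff)
  have C: "1 \<le> real (n choose (p - 1))"
    using assms(1) by (simp add: n_def Suc_le_eq)
  have C_S: "real (n choose (p - 1)) \<le> S"
    unfolding S_def using assms(1) by (intro member_le_sum) auto
  have S: "1 \<le> S"
    using C C_S by linarith
  have log_C_S: "log 2 (real (n choose (p - 1))) \<le> log 2 S"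
    using C C_S by (intro log_mono) linarith+
  have "log 2 (real (n choose (2 * p))) \<le> log 2 (real (n choose (p - 1)) * real (4 * p) powr \<alpha>)"
    using bound assms(1) unfolding n_def by (intro log_mono) (auto simp: Suc_le_eq)
  also have "\<dots> = log 2 (real (n choose (p - 1))) + \<alpha> * log 2 (real n + 1)"
    using \<open>1 \<le> real (n choose (p - 1))\<close> assms(1) n(2) by (simp add: log_mult log_powr)
  finally have x_le: "x \<le> \<alpha> * log 2 (real n + 1)"
    using log_C_S unfolding x_def by simp
  have "log 2 (real (n choose (2 * p))) \<le> log 2 (2 ^ n)"
    using binomial_le_pow2[of n "2 * p"] assms(1) unfolding n_def
    by (intro log_mono) (auto simp: Suc_le_eq)
  moreover have "0 \<le> log 2 S"
    using S by simp
  ultimately have "x \<le> real n"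
    unfolding x_def by simp
  moreover have "8 \<le> real n"
    using assms(1) n(1) by simp
  ultimately have "(x - log 2 (real n)) / log 2 (real n) \<le> x / log 2 (real n + 1)"
    by (rule log_ratio_shift[rotated])
  also have "\<dots> \<le> \<alpha>"
    using x_le \<open>8 \<le> real n\<close> by (simp add: divide_le_eq mult.commute)
  finally show ?thesis
    unfolding x_def S_def n_def n(1)[unfolded n_def] .
qed

theorem proposition3p10:
  fixes p :: nat and \<alpha> :: real
  assumes "prime p" and "odd p"
    and "card (UNIV :: 'f::{field,finite} set) = p"
    and "hadamard_exists (4 * p)"
    and "\<alpha> \<ge> 1"
    and "Delta_A (f_alpha (fHaem TYPE('f)) \<alpha>)"
  shows "\<alpha> \<ge> (log 2 (real ((4*p - 1) choose (2*p)))
                - log 2 (\<Sum>i<p. real ((4*p - 1) choose i))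
                - log 2 (4 * real p - 1)) / log 2 (4 * real p - 1)
       \<and> (log 2 (real ((4*p - 1) choose (2*p)))
                - log 2 (\<Sum>i<p. real ((4*p - 1) choose i))
                - log 2 (4 * real p - 1)) / log 2 (4 * real p - 1)
         \<ge> ((4 * real p - 1) * (bin_entropy (1/2 + 1/(8 * real p - 2))
                                 - bin_entropy (1/4 + 1/(16 * real p - 4)))
            - log 2 (16 * (real p)^2 - 4 * real p)) / log 2 (4 * real p - 1)"
proof -
  have "3 \<le> p"
    using prime_ge_2_nat[OF assms(1)] assms(2) by (cases "p = 2") auto
  then show ?thesis
    using alpha_ge_of_binomial_le_binomial_mult_powr binomial_le_binomial_mult_powr[OF assms(1,3,6)]
      entropy_bound_le_binomial_bound[OF prime_ge_1_nat[OF assms(1)]]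
    by auto
qed

end
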